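(* Let $(M,g)$ be an oriented Riemannian $8$-manifold with Hodge star $*$ and let $v,w$ be vector fields. The linear operator $B$ on $4$-forms given by $B\alpha = w\lrcorner *(v\lrcorner\alpha) - v\lrcorner *(w\lrcorner\alpha)$ is skew-symmetric with respect to the inner product induced by $g$, and its eigenvalues are $0$ and $\pm i|v\wedge w|$.
   Context: In the paper $g$ is the metric of a $\mathrm{Spin}(7)$-structure. $|v\wedge w|$ denotes the norm of the bivector $v\wedge w$, i.e. $|v\wedge w|^2 = |v|^2|w|^2 - g(v,w)^2$. *)

theory Defs
  imports Complex_Main
begin

text \<open>Pointwise linear algebra on an oriented Euclidean 8-space, identified with
R^8 with standard orthonormal basis e_0..e_7 and orientation e_0 ^ ... ^ e_7.
A k-form is given by its coefficients on the orthonormal basis e_I, I a k-subset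
of {0..7}, I = {i1 < ... < ik}, e_I = e_i1 ^ ... ^ e_ik.  Coefficients live in a
commutative ring 'a (real for the real forms, complex for the complexification).\<close>

definition idx_sets :: "nat \<Rightarrow> nat set set" where
  "idx_sets k = {I. I \<subseteq> {..<8} \<and> card I = k}"

definition is_form :: "nat \<Rightarrow> (nat set \<Rightarrow> 'a::zero) \<Rightarrow> bool" where
  "is_form k \<alpha> \<longleftrightarrow> (\<forall>I. \<alpha> I \<noteq> 0 \<longrightarrow> I \<in> idx_sets k)"

definition pos :: "nat set \<Rightarrow> nat \<Rightarrow> nat" where
  "pos I i = card {j\<in>I. j < i}"

text \<open>interior product: v \<lrcorner> e_I = sum over i in I of (-1)^(pos I i) v_i e_(I - {i})\<close>
definition interior :: "(nat \<Rightarrow> 'a::comm_ring_1) \<Rightarrow> (nat set \<Rightarrow> 'a) \<Rightarrow> (nat set \<Rightarrow> 'a)" where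
  "interior v \<alpha> J = (if J \<subseteq> {..<8}
      then (\<Sum>i\<in>{..<8} - J. (-1) ^ pos (insert i J) i * v i * \<alpha> (insert i J))
      else 0)"

text \<open>sign s(I) with e_I ^ e_(I^c) = s(I) vol\<close>
definition hsign :: "nat set \<Rightarrow> 'a::comm_ring_1" where
  "hsign I = (-1) ^ card {(i, j). i \<in> I \<and> j \<in> {..<8} - I \<and> j < i}"

text \<open>Hodge star: * e_I = s(I) e_(I^c)\<close>
definition hodge :: "(nat set \<Rightarrow> 'a::comm_ring_1) \<Rightarrow> (nat set \<Rightarrow> 'a)" where
  "hodge \<alpha> J = (if J \<subseteq> {..<8} then hsign ({..<8} - J) * \<alpha> ({..<8} - J) else 0)"

definition opB :: "(nat \<Rightarrow> 'a::comm_ring_1) \<Rightarrow> (nat \<Rightarrow> 'a) \<Rightarrow> (nat set \<Rightarrow> 'a) \<Rightarrow> (nat set \<Rightarrow> 'a)" where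
  "opB v w \<alpha> = (\<lambda>J. interior w (hodge (interior v \<alpha>)) J - interior v (hodge (interior w \<alpha>)) J)"

definition inner4 :: "(nat set \<Rightarrow> real) \<Rightarrow> (nat set \<Rightarrow> real) \<Rightarrow> real" where
  "inner4 \<alpha> \<beta> = (\<Sum>I\<in>idx_sets 4. \<alpha> I * \<beta> I)"

definition wedge_norm :: "(nat \<Rightarrow> real) \<Rightarrow> (nat \<Rightarrow> real) \<Rightarrow> real" where
  "wedge_norm v w = sqrt ((\<Sum>i<8. v i ^ 2) * (\<Sum>i<8. w i ^ 2) - (\<Sum>i<8. v i * w i) ^ 2)"

end

theory Submission
  imports Defs
begin

text \<open>Write \<open>\<iota>\<^sub>v\<close> for the interior product and \<open>\<epsilon>\<^sub>v\<close> for exterior multiplication by \<open>v\<close>.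
  Since \<open>* \<epsilon>\<^sub>w = \<plusminus> \<iota>\<^sub>w *\<close>, the operator is \<open>B = - * D\<close> on 4-forms, where
  \<open>D = \<epsilon>\<^sub>w \<iota>\<^sub>v - \<epsilon>\<^sub>v \<iota>\<^sub>w\<close> is the infinitesimal rotation of the plane of \<open>v\<close> and \<open>w\<close>
  acting on forms.  \<open>D\<close> is skew because \<open>\<iota>\<^sub>v\<close> and \<open>\<epsilon>\<^sub>v\<close> are adjoint, and it commutes
  with the Hodge star, which is self-adjoint on 4-forms; hence \<open>B\<close> is skew.  The anticommutation
  relations \<open>\<iota>\<^sub>v \<epsilon>\<^sub>w + \<epsilon>\<^sub>w \<iota>\<^sub>v = g(v, w)\<close> give \<open>D\<^sup>3 = -|v \<and> w|\<^sup>2 D\<close>, and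
  \<open>B\<^sup>2 = D\<^sup>2\<close> because \<open>** = 1\<close> on 4-forms, so \<open>B\<^sup>3 = -|v \<and> w|\<^sup>2 B\<close> and every eigenvalue
  is \<open>0\<close> or \<open>\<plusminus>i|v \<and> w|\<close>.  All three occur: \<open>\<iota>\<^sub>v \<iota>\<^sub>w\<close> of a 6-form lies in the kernel
  (any 4-form does when \<open>v \<and> w = 0\<close>), and a real 4-form \<open>x\<close> with \<open>B x \<noteq> 0\<close> yields the
  eigenvectors \<open>B\<^sup>2 x \<plusminus> i|v \<and> w| B x\<close>.\<close>

section \<open>Positions and signs\<close>

lemma finite_subset_lessThan8: "J \<subseteq> {..<8::nat} \<Longrightarrow> finite J"
  using finite_subset by blast

lemma card_compl_lessThan8: "J \<subseteq> {..<8::nat} \<Longrightarrow> card ({..<8} - J) = 8 - card J"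
  by (simp add: card_Diff_subset finite_subset_lessThan8)

lemma compl_compl_lessThan8: "J \<subseteq> {..<8::nat} \<Longrightarrow> {..<8} - ({..<8} - J) = J"
  by auto

lemma pos_insert: "pos (insert a I) i = pos I i + (if a < i \<and> a \<notin> I then 1 else 0)"
proof -
  have fin: "finite {j\<in>I. j < i}" by (rule finite_subset[of _ "{..<i}"]) auto
  show ?thesis
  proof (cases "a < i \<and> a \<notin> I")
    case True
    then have "{j\<in>insert a I. j < i} = insert a {j\<in>I. j < i}" by auto
    then show ?thesis using True fin by (simp add: pos_def)
  next
    case False
    then have "{j\<in>insert a I. j < i} = {j\<in>I. j < i}" by auto
    then show ?thesis using False by (simp add: pos_def)
  qed
qed

lemma pos_insert_self [simp]: "pos (insert a I) a = pos I a"
  by (simp add: pos_insert)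

lemma pos_Diff_singleton: "a \<in> I \<Longrightarrow> pos I i = pos (I - {a}) i + (if a < i then 1 else 0)"
  using pos_insert[of a "I - {a}" i] by (simp add: insert_absorb)

lemma pos_Diff_self [simp]: "pos (I - {a}) a = pos I a"
  using pos_insert[of a "I - {a}" a] by (cases "a \<in> I") (simp_all add: insert_absorb)

lemma pos_eq_sum: "finite B \<Longrightarrow> pos B a = (\<Sum>b\<in>B. if b < a then 1 else 0)"
  by (simp add: pos_def sum.inter_filter[symmetric])

lemma pos_add_card_greater:
  assumes "finite K" "i \<in> K"
  shows "pos K i + card {a\<in>K. i < a} = card K - 1"
proof -
  have "{a\<in>K. a < i} \<union> {a\<in>K. i < a} = K - {i}" by auto
  moreover have "card ({a\<in>K. a < i} \<union> {a\<in>K. i < a}) = card {a\<in>K. a < i} + card {a\<in>K. i < a}"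
    using assms(1) by (intro card_Un_disjoint) auto
  ultimately show ?thesis using assms by (simp add: pos_def)
qed

lemma minus_one_power_order_swap:
  fixes i l :: nat
  assumes "i \<noteq> l"
  shows "(-1::'a::ring_1) ^ (n + (if i < l then 1 else 0)) = - ((-1) ^ (n + (if l < i then 1 else 0)))"
  using assms by (cases "i < l") auto

lemma sum_offdiag_antisym:
  assumes "finite A" and "\<And>i l. i \<in> A \<Longrightarrow> l \<in> A \<Longrightarrow> i \<noteq> l \<Longrightarrow> f i l = - g l i"
  shows "(\<Sum>i\<in>A. \<Sum>l\<in>A - {i}. f i l) = - (\<Sum>i\<in>A. \<Sum>l\<in>A - {i}. (g i l :: 'a::ab_group_add))"
proof -
  have offdiag: "\<And>i. A - {i} = {l. l \<in> A \<and> i \<noteq> l}" by auto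
  have "(\<Sum>i\<in>A. \<Sum>l\<in>A - {i}. f i l) = - (\<Sum>i\<in>A. \<Sum>l\<in>A - {i}. g l i)"
    using assms(2) by (simp add: sum_negf[symmetric]) (intro sum.cong refl; auto)
  also have "(\<Sum>i\<in>A. \<Sum>l\<in>A - {i}. g l i) = (\<Sum>l\<in>A. \<Sum>i\<in>A - {l}. g l i)"
    unfolding offdiag by (subst sum.swap_restrict[OF assms(1) assms(1)]) (auto intro!: sum.cong)
  finally show ?thesis .
qed

section \<open>Interior and exterior multiplication\<close>

definition wedge :: "(nat \<Rightarrow> 'a::comm_ring_1) \<Rightarrow> (nat set \<Rightarrow> 'a) \<Rightarrow> (nat set \<Rightarrow> 'a)" where
  "wedge v \<alpha> J = (if J \<subseteq> {..<8} then (\<Sum>i\<in>J. (-1) ^ pos J i * v i * \<alpha> (J - {i})) else 0)"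

definition is_mixed_form :: "(nat set \<Rightarrow> 'a::zero) \<Rightarrow> bool" where
  "is_mixed_form \<alpha> \<longleftrightarrow> (\<forall>J. \<alpha> J \<noteq> 0 \<longrightarrow> J \<subseteq> {..<8})"

lemma interior_eq_sum: "J \<subseteq> {..<8} \<Longrightarrow>
    interior v \<alpha> J = (\<Sum>i\<in>{..<8} - J. (-1) ^ pos J i * v i * \<alpha> (insert i J))"
  by (simp add: interior_def)

lemma wedge_eq_sum: "J \<subseteq> {..<8} \<Longrightarrow> wedge v \<alpha> J = (\<Sum>i\<in>J. (-1) ^ pos J i * v i * \<alpha> (J - {i}))"
  by (simp add: wedge_def)

lemma interior_interior_expand:
  assumes J: "J \<subseteq> {..<8}"
  shows "interior v (interior w \<alpha>) J = (\<Sum>i\<in>{..<8} - J. \<Sum>l\<in>{..<8} - J - {i}.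
      (-1) ^ pos J i * v i * ((-1) ^ pos (insert i J) l * w l * \<alpha> (insert l (insert i J))))"
  unfolding interior_eq_sum[OF J] sum_distrib_left
proof (intro sum.cong refl)
  fix i assume "i \<in> {..<8} - J"
  moreover have "{..<8} - insert i J = {..<8} - J - {i}" by auto
  ultimately show "(-1) ^ pos J i * v i * interior w \<alpha> (insert i J) = (\<Sum>l\<in>{..<8} - J - {i}.
      (-1) ^ pos J i * v i * ((-1) ^ pos (insert i J) l * w l * \<alpha> (insert l (insert i J))))"
    using J by (simp add: interior_eq_sum sum_distrib_left)
qed

lemma wedge_wedge_expand:
  assumes J: "J \<subseteq> {..<8}"
  shows "wedge v (wedge w \<alpha>) J = (\<Sum>i\<in>J. \<Sum>l\<in>J - {i}.
      (-1) ^ pos J i * v i * ((-1) ^ pos (J - {i}) l * w l * \<alpha> (J - {i} - {l})))"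
  unfolding wedge_eq_sum[OF J] sum_distrib_left
proof (intro sum.cong refl)
  fix i
  show "(-1) ^ pos J i * v i * wedge w \<alpha> (J - {i}) = (\<Sum>l\<in>J - {i}.
      (-1) ^ pos J i * v i * ((-1) ^ pos (J - {i}) l * w l * \<alpha> (J - {i} - {l})))"
    using J by (simp add: wedge_eq_sum[of "J - {i}"] sum_distrib_left subset_iff)
qed

lemma interior_anticomm: "interior v (interior w \<alpha>) J = - interior w (interior v \<alpha>) J"
proof (cases "J \<subseteq> {..<8}")
  case False then show ?thesis by (simp add: interior_def)
next
  case True
  show ?thesis unfolding interior_interior_expand[OF True]
  proof (rule sum_offdiag_antisym)
    fix i l assume "i \<in> {..<8} - J" "l \<in> {..<8} - J" "i \<noteq> l"
    then show "(-1) ^ pos J i * v i * ((-1) ^ pos (insert i J) l * w l * \<alpha> (insert l (insert i J))) =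
      - ((-1) ^ pos J l * w l * ((-1) ^ pos (insert l J) i * v i * \<alpha> (insert i (insert l J))))"
      using minus_one_power_order_swap[of i l "pos J l", where 'a='a]
      by (simp add: pos_insert insert_commute power_add)
  qed simp
qed

lemma wedge_anticomm: "wedge v (wedge w \<alpha>) J = - wedge w (wedge v \<alpha>) J"
proof (cases "J \<subseteq> {..<8}")
  case False then show ?thesis by (simp add: wedge_def)
next
  case True
  show ?thesis unfolding wedge_wedge_expand[OF True]
  proof (rule sum_offdiag_antisym)
    show "finite J" using True by (rule finite_subset_lessThan8)
  next
    fix i l assume il: "i \<in> J" "l \<in> J" "i \<noteq> l"
    have "J - {l} - {i} = J - {i} - {l}" by auto
    with il show "(-1) ^ pos J i * v i * ((-1) ^ pos (J - {i}) l * w l * \<alpha> (J - {i} - {l})) =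
      - ((-1) ^ pos J l * w l * ((-1) ^ pos (J - {l}) i * v i * \<alpha> (J - {l} - {i})))"
      using minus_one_power_order_swap[of i l "pos (J - {l}) i + pos (J - {i}) l", where 'a='a]
      by (simp add: pos_Diff_singleton[of i J l] pos_Diff_singleton[of l J i] power_add algebra_simps)
  qed
qed

lemma interior_wedge_expand:
  assumes J: "J \<subseteq> {..<8}"
  shows "interior v (wedge w \<alpha>) J = (\<Sum>i\<in>{..<8} - J. v i * w i) * \<alpha> J +
    (\<Sum>i\<in>{..<8} - J. \<Sum>l\<in>J. (-1) ^ pos J i * (-1) ^ pos (insert i J) l * v i * w l * \<alpha> (insert i (J - {l})))"
  unfolding interior_eq_sum[OF J] sum_distrib_right sum.distrib[symmetric]
proof (intro sum.cong refl)
  fix i assume i: "i \<in> {..<8} - J"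
  have fin: "finite J" using J by (rule finite_subset_lessThan8)
  have "\<And>l. l \<in> J \<Longrightarrow> insert i J - {l} = insert i (J - {l})" using i by auto
  then have "wedge w \<alpha> (insert i J) =
      (-1) ^ pos J i * w i * \<alpha> J + (\<Sum>l\<in>J. (-1) ^ pos (insert i J) l * w l * \<alpha> (insert i (J - {l})))"
    using i J fin by (simp add: wedge_eq_sum insert_Diff_if)
  then show "(-1) ^ pos J i * v i * wedge w \<alpha> (insert i J) = v i * w i * \<alpha> J +
      (\<Sum>l\<in>J. (-1) ^ pos J i * (-1) ^ pos (insert i J) l * v i * w l * \<alpha> (insert i (J - {l})))"
    by (simp add: distrib_left sum_distrib_left mult_ac)
qed

lemma wedge_interior_expand:
  assumes J: "J \<subseteq> {..<8}"
  shows "wedge w (interior v \<alpha>) J = (\<Sum>l\<in>J. v l * w l) * \<alpha> J +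
    (\<Sum>l\<in>J. \<Sum>i\<in>{..<8} - J. (-1) ^ pos J l * (-1) ^ pos (J - {l}) i * v i * w l * \<alpha> (insert i (J - {l})))"
  unfolding wedge_eq_sum[OF J] sum_distrib_right sum.distrib[symmetric]
proof (intro sum.cong refl)
  fix l assume l: "l \<in> J"
  have "{..<8} - (J - {l}) = insert l ({..<8} - J)" and "insert l (J - {l}) = J"
    using l J by auto
  then have "interior v \<alpha> (J - {l}) =
      (-1) ^ pos J l * v l * \<alpha> J + (\<Sum>i\<in>{..<8} - J. (-1) ^ pos (J - {l}) i * v i * \<alpha> (insert i (J - {l})))"
    using l J by (simp add: interior_eq_sum[of "J - {l}"] subset_iff)
  then show "(-1) ^ pos J l * w l * interior v \<alpha> (J - {l}) = v l * w l * \<alpha> J +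
      (\<Sum>i\<in>{..<8} - J. (-1) ^ pos J l * (-1) ^ pos (J - {l}) i * v i * w l * \<alpha> (insert i (J - {l})))"
    by (simp add: distrib_left sum_distrib_left mult_ac)
qed

text \<open>The cross terms, which move one index into \<open>J\<close> and another one out of it, cancel in pairs.\<close>
lemma interior_wedge:
  assumes "is_mixed_form \<alpha>"
  shows "interior v (wedge w \<alpha>) J + wedge w (interior v \<alpha>) J = (\<Sum>i<8. v i * w i) * \<alpha> J"
proof (cases "J \<subseteq> {..<8}")
  case False
  moreover from False have "\<alpha> J = 0" using assms unfolding is_mixed_form_def by blast
  ultimately show ?thesis by (simp add: interior_def wedge_def)
next
  case True
  let ?A = "{..<8} - J"
  have cross: "(\<Sum>i\<in>?A. \<Sum>l\<in>J. (-1) ^ pos J i * (-1) ^ pos (insert i J) l * v i * w l * \<alpha> (insert i (J - {l}))) =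
     - (\<Sum>l\<in>J. \<Sum>i\<in>?A. (-1) ^ pos J l * (-1) ^ pos (J - {l}) i * v i * w l * \<alpha> (insert i (J - {l})))"
    unfolding sum.swap[of _ ?A] sum_negf[symmetric]
  proof (intro sum.cong refl)
    fix l i assume l: "l \<in> J" and i: "i \<in> ?A"
    have "pos (insert i J) l = pos J l + (if i < l then 1 else 0)" using i by (simp add: pos_insert)
    moreover have "pos J i = pos (J - {l}) i + (if l < i then 1 else 0)" using l by (rule pos_Diff_singleton)
    moreover have "i \<noteq> l" using i l by auto
    ultimately show "(-1) ^ pos J i * (-1) ^ pos (insert i J) l * v i * w l * \<alpha> (insert i (J - {l})) =
       - ((-1) ^ pos J l * (-1) ^ pos (J - {l}) i * v i * w l * \<alpha> (insert i (J - {l})))"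
      using minus_one_power_order_swap[of i l "pos (J - {l}) i + pos J l", where 'a='a]
      by (simp add: power_add algebra_simps)
  qed
  have "(\<Sum>i<8. v i * w i) = (\<Sum>i\<in>?A. v i * w i) + (\<Sum>i\<in>J. v i * w i)"
    using True finite_subset_lessThan8[OF True] by (simp add: sum.subset_diff[of J "{..<8}"])
  then show ?thesis
    unfolding interior_wedge_expand[OF True] wedge_interior_expand[OF True] cross
    by (simp add: algebra_simps)
qed

section \<open>The Hodge star\<close>

definition shuffle_inversions :: "nat set \<Rightarrow> nat" where
  "shuffle_inversions K = card {(i, j). i \<in> K \<and> j \<in> {..<8} - K \<and> j < i}"

lemma hsign_eq_shuffle_inversions: "hsign K = (-1) ^ shuffle_inversions K"
  by (simp add: hsign_def shuffle_inversions_def)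

lemma shuffle_inversions_eq_sum:
  assumes "finite K"
  shows "shuffle_inversions K = (\<Sum>a\<in>K. pos ({..<8} - K) a)"
proof -
  have "{(i, j). i \<in> K \<and> j \<in> {..<8} - K \<and> j < i} = Sigma K (\<lambda>a. {j\<in>{..<8} - K. j < a})" by auto
  then show ?thesis
    using assms by (simp add: shuffle_inversions_def card_SigmaI pos_def)
qed

lemma shuffle_inversions_compl:
  assumes J: "J \<subseteq> {..<8}"
  shows "shuffle_inversions J + shuffle_inversions ({..<8} - J) = card J * card ({..<8} - J)"
proof -
  let ?C = "{..<8::nat} - J"
  have fJ: "finite J" using J by (rule finite_subset_lessThan8)
  have "shuffle_inversions J + shuffle_inversions ?C = (\<Sum>a\<in>J. pos ?C a) + (\<Sum>b\<in>?C. pos J b)"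
    using fJ J by (simp add: shuffle_inversions_eq_sum compl_compl_lessThan8)
  also have "\<dots> = (\<Sum>a\<in>J. \<Sum>b\<in>?C. if b < a then 1 else 0) + (\<Sum>a\<in>J. \<Sum>b\<in>?C. if a < b then 1 else 0)"
    using fJ by (simp add: pos_eq_sum sum.swap[of _ ?C])
  also have "\<dots> = (\<Sum>a\<in>J. \<Sum>b\<in>?C. 1)"
    unfolding sum.distrib[symmetric] by (intro sum.cong refl) auto
  finally show ?thesis by simp
qed

lemma hsign_mult_hsign_compl:
  assumes J: "J \<subseteq> {..<8}"
  shows "hsign J * hsign ({..<8} - J) = (-1) ^ card J"
proof -
  have k: "card J \<le> 8" using card_mono[OF _ J] by simp
  have "hsign J * hsign ({..<8} - J) = ((-1::'a) ^ (card J * (8 - card J)))"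
    using shuffle_inversions_compl[OF J] card_compl_lessThan8[OF J]
    by (simp add: hsign_eq_shuffle_inversions power_add[symmetric])
  also have "\<dots> = (-1) ^ card J"
    using k by (simp add: minus_one_power_iff)
  finally show ?thesis .
qed

lemma shuffle_inversions_Diff:
  assumes K: "K \<subseteq> {..<8}" and i: "i \<in> K"
  shows "shuffle_inversions (K - {i}) + pos ({..<8} - K) i = shuffle_inversions K + card {a\<in>K. i < a}"
proof -
  let ?J = "{..<8::nat} - K"
  have fK: "finite K" using K by (rule finite_subset_lessThan8)
  have "{..<8} - (K - {i}) = insert i ?J" using K i by auto
  then have "shuffle_inversions (K - {i}) = (\<Sum>a\<in>K - {i}. pos ?J a + (if i < a then 1 else 0))"
    using fK i by (simp add: shuffle_inversions_eq_sum pos_insert cong: sum.cong)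
  also have "\<dots> = (\<Sum>a\<in>K - {i}. pos ?J a) + card {a\<in>K. i < a}"
  proof -
    have "{a\<in>K - {i}. i < a} = {a\<in>K. i < a}" by auto
    then show ?thesis using fK by (simp add: sum.distrib sum.inter_filter[symmetric])
  qed
  finally show ?thesis
    using fK i by (simp add: shuffle_inversions_eq_sum sum.remove)
qed

lemma hodge_eq_compl: "J \<subseteq> {..<8} \<Longrightarrow> hodge \<alpha> J = hsign ({..<8} - J) * \<alpha> ({..<8} - J)"
  by (simp add: hodge_def)

lemma hodge_hodge:
  assumes "is_form k \<alpha>"
  shows "hodge (hodge \<alpha>) J = (-1) ^ k * \<alpha> J"
proof (cases "J \<subseteq> {..<8}")
  case True
  have "hodge (hodge \<alpha>) J = (hsign J * hsign ({..<8} - J)) * \<alpha> J"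
    using True by (simp add: hodge_eq_compl compl_compl_lessThan8 mult_ac)
  also have "\<dots> = (-1) ^ k * \<alpha> J"
  proof (cases "\<alpha> J = 0")
    case False
    then have "card J = k" using assms by (auto simp: is_form_def idx_sets_def)
    then show ?thesis using True by (simp only: hsign_mult_hsign_compl)
  qed simp
  finally show ?thesis .
next
  case False
  moreover from False have "\<alpha> J = 0" using assms by (auto simp: is_form_def idx_sets_def)
  ultimately show ?thesis by (simp add: hodge_def)
qed

lemma hsign_Diff_singleton:
  assumes K: "K \<subseteq> {..<8}" and i: "i \<in> K" and k: "card (K - {i}) = k"
  shows "(-1) ^ k * (-1) ^ pos ({..<8} - K) i * hsign (K - {i}) = hsign K * (-1) ^ pos K i"
proof -
  define m where "m = card {a\<in>K. i < a}"
  have fK: "finite K" using K by (rule finite_subset_lessThan8)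
  have "pos K i + m = k" using pos_add_card_greater[OF fK i] k i by (simp add: m_def)
  moreover have "shuffle_inversions (K - {i}) + pos ({..<8} - K) i = shuffle_inversions K + m"
    using shuffle_inversions_Diff[OF K i] by (simp add: m_def)
  ultimately have "k + pos ({..<8} - K) i + shuffle_inversions (K - {i}) =
      (shuffle_inversions K + pos K i) + 2 * m" by simp
  then have "(-1::'a) ^ (k + pos ({..<8} - K) i + shuffle_inversions (K - {i})) =
      (-1) ^ (shuffle_inversions K + pos K i)"
    by (simp add: power_add power_mult)
  then show ?thesis by (simp add: hsign_eq_shuffle_inversions power_add)
qed

lemma hodge_wedge:
  assumes "is_form k \<alpha>"
  shows "hodge (wedge w \<alpha>) J = (-1) ^ k * interior w (hodge \<alpha>) J"
proof (cases "J \<subseteq> {..<8}")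
  case False then show ?thesis by (simp add: hodge_def interior_def)
next
  case True
  let ?K = "{..<8::nat} - J"
  have "hodge \<alpha> (insert i J) = hsign (?K - {i}) * \<alpha> (?K - {i})" if "i \<in> ?K" for i
  proof -
    have "{..<8} - insert i J = ?K - {i}" by auto
    then show ?thesis using that True by (simp add: hodge_eq_compl)
  qed
  then have "interior w (hodge \<alpha>) J = (\<Sum>i\<in>?K. (-1) ^ pos J i * w i * (hsign (?K - {i}) * \<alpha> (?K - {i})))"
    using True by (simp add: interior_eq_sum)
  moreover have "hodge (wedge w \<alpha>) J = (\<Sum>i\<in>?K. hsign ?K * ((-1) ^ pos ?K i * w i * \<alpha> (?K - {i})))"
    using True by (simp add: hodge_eq_compl wedge_eq_sum sum_distrib_left)
  moreover have "hsign ?K * ((-1) ^ pos ?K i * w i * \<alpha> (?K - {i})) =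
      (-1) ^ k * ((-1) ^ pos J i * w i * (hsign (?K - {i}) * \<alpha> (?K - {i})))" if i: "i \<in> ?K" for i
  proof (cases "\<alpha> (?K - {i}) = 0")
    case False
    then have "card (?K - {i}) = k" using assms by (auto simp: is_form_def idx_sets_def)
    then have s: "(-1) ^ k * (-1) ^ pos J i * hsign (?K - {i}) = hsign ?K * (-1) ^ pos ?K i"
      using hsign_Diff_singleton[of ?K i k] i True by (simp add: compl_compl_lessThan8)
    have "(-1) ^ k * ((-1) ^ pos J i * w i * (hsign (?K - {i}) * \<alpha> (?K - {i}))) =
        ((-1) ^ k * (-1) ^ pos J i * hsign (?K - {i})) * (w i * \<alpha> (?K - {i}))"
      by (simp only: mult_ac)
    then show ?thesis unfolding s by (simp only: mult_ac)
  qed simp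
  ultimately show ?thesis by (simp add: sum_distrib_left)
qed

lemma is_form_interior: "is_form k \<alpha> \<Longrightarrow> is_form (k - 1) (interior v \<alpha>)"
  unfolding is_form_def
proof (intro allI impI)
  fix J assume f: "\<forall>I. \<alpha> I \<noteq> 0 \<longrightarrow> I \<in> idx_sets k" and nz: "interior v \<alpha> J \<noteq> 0"
  then have J: "J \<subseteq> {..<8}" by (auto simp: interior_def split: if_splits)
  with nz obtain i where i: "i \<in> {..<8} - J" "(-1) ^ pos J i * v i * \<alpha> (insert i J) \<noteq> 0"
    by (auto simp: interior_eq_sum elim: sum.not_neutral_contains_not_neutral)
  then have "\<alpha> (insert i J) \<noteq> 0" by auto
  then have "card (insert i J) = k" using f by (simp add: idx_sets_def)
  then show "J \<in> idx_sets (k - 1)" using i J finite_subset_lessThan8[OF J] by (simp add: idx_sets_def)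
qed

lemma is_form_wedge: "is_form k \<alpha> \<Longrightarrow> is_form (k + 1) (wedge v \<alpha>)"
  unfolding is_form_def
proof (intro allI impI)
  fix J assume f: "\<forall>I. \<alpha> I \<noteq> 0 \<longrightarrow> I \<in> idx_sets k" and nz: "wedge v \<alpha> J \<noteq> 0"
  then have J: "J \<subseteq> {..<8}" by (auto simp: wedge_def split: if_splits)
  with nz obtain i where i: "i \<in> J" "(-1) ^ pos J i * v i * \<alpha> (J - {i}) \<noteq> 0"
    by (auto simp: wedge_eq_sum elim: sum.not_neutral_contains_not_neutral)
  then have "\<alpha> (J - {i}) \<noteq> 0" by auto
  then have "card (J - {i}) = k" using f by (simp add: idx_sets_def)
  moreover have "card J \<noteq> 0" using i finite_subset_lessThan8[OF J] by auto
  ultimately show "J \<in> idx_sets (k + 1)" using i J by (simp add: idx_sets_def)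
qed

lemma is_form_hodge: "is_form k \<alpha> \<Longrightarrow> is_form (8 - k) (hodge \<alpha>)"
  unfolding is_form_def
proof (intro allI impI)
  fix J assume f: "\<forall>I. \<alpha> I \<noteq> 0 \<longrightarrow> I \<in> idx_sets k" and nz: "hodge \<alpha> J \<noteq> 0"
  then have J: "J \<subseteq> {..<8}" by (auto simp: hodge_def split: if_splits)
  with nz have "\<alpha> ({..<8} - J) \<noteq> 0" by (auto simp: hodge_eq_compl)
  then have "card ({..<8} - J) = k" using f by (simp add: idx_sets_def)
  moreover have "card J \<le> 8" using card_mono[OF _ J] by simp
  ultimately show "J \<in> idx_sets (8 - k)" using J by (simp add: idx_sets_def card_compl_lessThan8)
qed

lemma is_form_above_8:
  assumes "is_form k \<alpha>" and "8 < k"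
  shows "\<alpha> = (\<lambda>_. 0)"
proof (rule ext, rule ccontr)
  fix J assume "\<alpha> J \<noteq> 0"
  then have J: "J \<subseteq> {..<8}" "card J = k" using assms(1) by (auto simp: is_form_def idx_sets_def)
  then show False using card_mono[OF _ J(1)] assms(2) by simp
qed

lemma is_form_diff [simp]:
  "is_form k (\<alpha>::nat set \<Rightarrow> 'a::ab_group_add) \<Longrightarrow> is_form k \<beta> \<Longrightarrow> is_form k (\<lambda>J. \<alpha> J - \<beta> J)"
  unfolding is_form_def by (metis diff_self)

lemma is_form_add [simp]:
  "is_form k (\<alpha>::nat set \<Rightarrow> 'a::monoid_add) \<Longrightarrow> is_form k \<beta> \<Longrightarrow> is_form k (\<lambda>J. \<alpha> J + \<beta> J)"
  unfolding is_form_def by (metis add_0)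

lemma is_form_scale [simp]: "is_form k (\<alpha>::nat set \<Rightarrow> 'a::mult_zero) \<Longrightarrow> is_form k (\<lambda>J. c * \<alpha> J)"
  unfolding is_form_def by (metis mult_zero_right)

lemma is_form_imp_mixed: "is_form k \<alpha> \<Longrightarrow> is_mixed_form \<alpha>"
  by (auto simp: is_form_def is_mixed_form_def idx_sets_def)

lemma is_mixed_form_interior [simp]: "is_mixed_form (interior v \<alpha>)"
  and is_mixed_form_wedge [simp]: "is_mixed_form (wedge v \<alpha>)"
  by (auto simp: is_mixed_form_def interior_def wedge_def split: if_splits)

lemma is_mixed_form_diff [simp]:
  "is_mixed_form (\<alpha>::nat set \<Rightarrow> 'a::ab_group_add) \<Longrightarrow> is_mixed_form \<beta> \<Longrightarrow> is_mixed_form (\<lambda>J. \<alpha> J - \<beta> J)"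
  unfolding is_mixed_form_def by (metis diff_self)

lemma interior_diff [simp]: "interior v (\<lambda>J. \<alpha> J - \<beta> J) = (\<lambda>J. interior v \<alpha> J - interior v \<beta> J)"
  and interior_add [simp]: "interior v (\<lambda>J. \<alpha> J + \<beta> J) = (\<lambda>J. interior v \<alpha> J + interior v \<beta> J)"
  and interior_minus [simp]: "interior v (\<lambda>J. - \<alpha> J) = (\<lambda>J. - interior v \<alpha> J)"
  and interior_scale [simp]: "interior v (\<lambda>J. c * \<alpha> J) = (\<lambda>J. c * interior v \<alpha> J)"
  and interior_zero [simp]: "interior v (\<lambda>J. 0) = (\<lambda>J. 0)"
  by (simp_all add: fun_eq_iff interior_def sum_subtractf sum.distrib sum_negf sum_distrib_left algebra_simps)

lemma wedge_diff [simp]: "wedge v (\<lambda>J. \<alpha> J - \<beta> J) = (\<lambda>J. wedge v \<alpha> J - wedge v \<beta> J)"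
  and wedge_add [simp]: "wedge v (\<lambda>J. \<alpha> J + \<beta> J) = (\<lambda>J. wedge v \<alpha> J + wedge v \<beta> J)"
  and wedge_minus [simp]: "wedge v (\<lambda>J. - \<alpha> J) = (\<lambda>J. - wedge v \<alpha> J)"
  and wedge_scale [simp]: "wedge v (\<lambda>J. c * \<alpha> J) = (\<lambda>J. c * wedge v \<alpha> J)"
  and wedge_zero [simp]: "wedge v (\<lambda>J. 0) = (\<lambda>J. 0)"
  by (simp_all add: fun_eq_iff wedge_def sum_subtractf sum.distrib sum_negf sum_distrib_left algebra_simps)

lemma hodge_diff [simp]: "hodge (\<lambda>J. \<alpha> J - \<beta> J) = (\<lambda>J. hodge \<alpha> J - hodge \<beta> J)"
  and hodge_add [simp]: "hodge (\<lambda>J. \<alpha> J + \<beta> J) = (\<lambda>J. hodge \<alpha> J + hodge \<beta> J)"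
  and hodge_minus [simp]: "hodge (\<lambda>J. - \<alpha> J) = (\<lambda>J. - hodge \<alpha> J)"
  and hodge_scale [simp]: "hodge (\<lambda>J. c * \<alpha> J) = (\<lambda>J. c * hodge \<alpha> J)"
  and hodge_zero [simp]: "hodge (\<lambda>J. 0) = (\<lambda>J. 0)"
  by (simp_all add: fun_eq_iff hodge_def algebra_simps)

lemma interior_interior_self: "interior (v::nat \<Rightarrow> 'a::field_char_0) (interior v \<alpha>) = (\<lambda>J. 0)"
  using interior_anticomm[of v v \<alpha>] by (simp add: fun_eq_iff)

lemma wedge_wedge_self: "wedge (v::nat \<Rightarrow> 'a::field_char_0) (wedge v \<alpha>) = (\<lambda>J. 0)"
  using wedge_anticomm[of v v \<alpha>] by (simp add: fun_eq_iff)

lemma wedge_hodge: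
  assumes "is_form k \<alpha>"
  shows "wedge w (hodge \<alpha>) J = (-1) ^ (k + 1) * hodge (interior w \<alpha>) J"
proof (cases "k \<le> 8")
  case True
  have h: "is_form (8 - k) (hodge \<alpha>)" using assms by (rule is_form_hodge)
  have hh: "hodge (hodge \<alpha>) = (\<lambda>J. (-1) ^ k * \<alpha> J)"
    using hodge_hodge[OF assms] by (simp add: fun_eq_iff)
  have "(-1::'a) ^ (8 - k) * (-1) ^ k = 1"
    using True by (simp add: power_add[symmetric])
  then have "hodge (wedge w (hodge \<alpha>)) = interior w \<alpha>"
    using hodge_wedge[OF h, of w] by (simp add: fun_eq_iff hh mult.assoc[symmetric])
  then have "(-1) ^ (8 - k + 1) * wedge w (hodge \<alpha>) J = hodge (interior w \<alpha>) J"
    using hodge_hodge[OF is_form_wedge[OF h], of w J] by simp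
  moreover have "(-1) ^ (k + 1) = ((-1) ^ (8 - k + 1) :: 'a)"
    using True by (simp add: minus_one_power_iff)
  ultimately show ?thesis by (metis left_minus_one_mult_self)
next
  case False
  then show ?thesis using is_form_above_8[OF assms] by (simp add: hodge_def wedge_def)
qed

lemma interior_wedge_eq:
  "is_mixed_form \<alpha> \<Longrightarrow>
    interior v (wedge w \<alpha>) = (\<lambda>J. (\<Sum>i<8. v i * w i) * \<alpha> J - wedge w (interior v \<alpha>) J)"
  using interior_wedge[of \<alpha> v w] by (simp add: fun_eq_iff eq_diff_eq)

lemma interior_hodge:
  assumes "is_form k \<alpha>"
  shows "interior w (hodge \<alpha>) = (\<lambda>J. (-1) ^ k * hodge (wedge w \<alpha>) J)"
  using hodge_wedge[OF assms, of w] by (simp add: fun_eq_iff)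

section \<open>The operators \<open>D\<close> and \<open>B\<close>\<close>

text \<open>The derivation of the exterior algebra induced by the skew endomorphism
  \<open>x \<mapsto> g(v, x) w - g(w, x) v\<close>, whose eigenvalues are \<open>0\<close> and \<open>\<plusminus>i|v \<and> w|\<close>.\<close>
definition opD :: "(nat \<Rightarrow> 'a::comm_ring_1) \<Rightarrow> (nat \<Rightarrow> 'a) \<Rightarrow> (nat set \<Rightarrow> 'a) \<Rightarrow> (nat set \<Rightarrow> 'a)" where
  "opD v w \<alpha> = (\<lambda>J. wedge w (interior v \<alpha>) J - wedge v (interior w \<alpha>) J)"

lemma opD_minus [simp]: "opD v w (\<lambda>J. - \<alpha> J) = (\<lambda>J. - opD v w \<alpha> J)"
  by (simp add: opD_def fun_eq_iff algebra_simps)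

lemma is_form_opD:
  assumes "is_form k \<alpha>"
  shows "is_form k (opD v w \<alpha>)"
proof (cases k)
  case 0
  then have "\<alpha> I = 0" if "I \<noteq> {}" for I
    using assms that finite_subset_lessThan8 by (fastforce simp: is_form_def idx_sets_def)
  then have "interior u \<alpha> = (\<lambda>_. 0)" for u
    by (simp add: fun_eq_iff interior_def)
  then show ?thesis by (simp add: opD_def is_form_def)
next
  case (Suc n)
  then have "is_form k (wedge u (interior u' \<alpha>))" for u u'
    using is_form_wedge[OF is_form_interior[OF assms]] by simp
  then show ?thesis by (simp add: opD_def)
qed

lemma opB_eq_hodge_opD:
  assumes "is_form k \<alpha>"
  shows "opB v w \<alpha> J = (-1) ^ (k - 1) * hodge (opD v w \<alpha>) J"
  using interior_hodge[OF is_form_interior[OF assms]]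
  by (simp add: opB_def opD_def algebra_simps)

lemma opD_hodge_commute:
  assumes "is_form k \<beta>"
  shows "opD v w (hodge \<beta>) = hodge (opD v w \<beta>)"
proof -
  have "wedge u' (interior u (hodge \<beta>)) = hodge (interior u' (wedge u \<beta>))" for u u'
    unfolding interior_hodge[OF assms]
    using wedge_hodge[OF is_form_wedge[OF assms], of u'] by (simp add: fun_eq_iff power_add)
  moreover have "(\<Sum>i<8. w i * v i) = (\<Sum>i<8. v i * w i)" by (simp add: mult.commute)
  ultimately show ?thesis
    using is_form_imp_mixed[OF assms]
    by (simp add: opD_def interior_wedge_eq fun_eq_iff algebra_simps)
qed

lemma opD_cube:
  fixes v w :: "nat \<Rightarrow> 'a::field_char_0"
  assumes "is_mixed_form \<alpha>"
  shows "opD v w (opD v w (opD v w \<alpha>)) =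
    (\<lambda>J. - ((\<Sum>i<8. v i * v i) * (\<Sum>i<8. w i * w i) - (\<Sum>i<8. v i * w i)^2) * opD v w \<alpha> J)"
proof -
  have "(\<Sum>i<8. w i * v i) = (\<Sum>i<8. v i * w i)" by (simp add: mult.commute)
  moreover have "interior w (interior v \<beta>) = (\<lambda>J. - interior v (interior w \<beta>) J)"
    and "wedge w (wedge v \<beta>) = (\<lambda>J. - wedge v (wedge w \<beta>) J)" for \<beta>
    by (simp_all add: fun_eq_iff interior_anticomm[of w v] wedge_anticomm[of w v])
  \<comment> \<open>normal-order every word in the \<open>\<epsilon>\<close>'s and \<open>\<iota>\<close>'s; squares of either vanish\<close>
  ultimately show ?thesis
    using assms
    by (simp add: opD_def interior_wedge_eq interior_interior_self wedge_wedge_self)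
      (simp add: fun_eq_iff algebra_simps power2_eq_square)
qed

lemma opB_eq_neg_hodge_opD:
  "is_form 4 \<alpha> \<Longrightarrow> opB v w \<alpha> = (\<lambda>J. - hodge (opD v w \<alpha>) J)"
  using opB_eq_hodge_opD[of 4 \<alpha> v w] by (simp add: fun_eq_iff)

lemma is_form_opB:
  assumes "is_form k \<alpha>"
  shows "is_form (8 - k) (opB v w \<alpha>)"
proof -
  have "opB v w \<alpha> = (\<lambda>J. (-1) ^ (k - 1) * hodge (opD v w \<alpha>) J)"
    using opB_eq_hodge_opD[OF assms] by (simp add: fun_eq_iff)
  then show ?thesis using is_form_hodge[OF is_form_opD[OF assms]] by simp
qed

lemma opB_square:
  assumes "is_form 4 \<alpha>"
  shows "opB v w (opB v w \<alpha>) = opD v w (opD v w \<alpha>)"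
proof -
  have D: "is_form 4 (opD v w \<alpha>)" using assms by (rule is_form_opD)
  have "opB v w (opB v w \<alpha>) = (\<lambda>J. - hodge (opD v w (opB v w \<alpha>)) J)"
    using is_form_opB[OF assms] by (simp add: opB_eq_neg_hodge_opD)
  also have "\<dots> = hodge (hodge (opD v w (opD v w \<alpha>)))"
    by (simp add: opB_eq_neg_hodge_opD[OF assms] opD_hodge_commute[OF D])
  also have "\<dots> = opD v w (opD v w \<alpha>)"
    using hodge_hodge[OF is_form_opD[OF D]] by (simp add: fun_eq_iff)
  finally show ?thesis .
qed

lemma opB_cube:
  fixes v w :: "nat \<Rightarrow> 'a::field_char_0"
  assumes "is_form 4 \<alpha>"
  shows "opB v w (opB v w (opB v w \<alpha>)) =
    (\<lambda>J. - ((\<Sum>i<8. v i * v i) * (\<Sum>i<8. w i * w i) - (\<Sum>i<8. v i * w i)^2) * opB v w \<alpha> J)"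
proof -
  have "opB v w (opB v w (opB v w \<alpha>)) = opB v w (opD v w (opD v w \<alpha>))"
    by (simp add: opB_square[OF assms])
  also have "\<dots> = (\<lambda>J. - hodge (opD v w (opD v w (opD v w \<alpha>))) J)"
    using assms by (simp add: opB_eq_neg_hodge_opD is_form_opD)
  finally show ?thesis
    using assms by (simp add: opD_cube is_form_imp_mixed opB_eq_neg_hodge_opD)
qed

section \<open>Skew-adjointness\<close>

definition pairing :: "(nat set \<Rightarrow> 'a::comm_ring_1) \<Rightarrow> (nat set \<Rightarrow> 'a) \<Rightarrow> 'a" where
  "pairing \<alpha> \<beta> = (\<Sum>I\<in>Pow {..<8}. \<alpha> I * \<beta> I)"

lemma pairing_commute: "pairing \<alpha> \<beta> = pairing \<beta> \<alpha>"
  by (simp add: pairing_def mult.commute)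

lemma pairing_diff_left [simp]: "pairing (\<lambda>J. \<alpha> J - \<beta> J) \<gamma> = pairing \<alpha> \<gamma> - pairing \<beta> \<gamma>"
  and pairing_diff_right [simp]: "pairing \<gamma> (\<lambda>J. \<alpha> J - \<beta> J) = pairing \<gamma> \<alpha> - pairing \<gamma> \<beta>"
  and pairing_minus_left [simp]: "pairing (\<lambda>J. - \<alpha> J) \<gamma> = - pairing \<alpha> \<gamma>"
  by (simp_all add: pairing_def sum_subtractf sum_negf algebra_simps)

lemma pairing_interior: "pairing (interior v \<alpha>) \<beta> = pairing \<alpha> (wedge v \<beta>)"
proof -
  let ?P = "Pow {..<8::nat}"
  have "pairing (interior v \<alpha>) \<beta> = (\<Sum>(K, i)\<in>Sigma ?P (\<lambda>K. {..<8} - K). (-1) ^ pos K i * v i * \<alpha> (insert i K) * \<beta> K)"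
    unfolding pairing_def by (simp add: sum.Sigma interior_eq_sum sum_distrib_right)
  also have "\<dots> = (\<Sum>(I, i)\<in>Sigma ?P (\<lambda>I. I). \<alpha> I * ((-1) ^ pos I i * v i * \<beta> (I - {i})))"
  proof (rule sum.reindex_bij_witness[where j = "\<lambda>(K, i). (insert i K, i)" and i = "\<lambda>(I, i). (I - {i}, i)"])
    fix a assume "a \<in> Sigma ?P (\<lambda>K. {..<8} - K)"
    then obtain K i where a: "a = (K, i)" "K \<subseteq> {..<8}" "i \<in> {..<8} - K" by auto
    then show "(case case a of (K, i) \<Rightarrow> (insert i K, i) of (I, i) \<Rightarrow> (I - {i}, i)) = a"
      and "(case a of (K, i) \<Rightarrow> (insert i K, i)) \<in> Sigma ?P (\<lambda>I. I)" by auto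
    have "insert i K - {i} = K" using a by auto
    then show "(case case a of (K, i) \<Rightarrow> (insert i K, i) of (I, i) \<Rightarrow> \<alpha> I * ((-1) ^ pos I i * v i * \<beta> (I - {i}))) =
        (case a of (K, i) \<Rightarrow> (-1) ^ pos K i * v i * \<alpha> (insert i K) * \<beta> K)"
      using a by (simp add: algebra_simps)
  next
    fix b assume "b \<in> Sigma ?P (\<lambda>I. I)"
    then obtain I i where b: "b = (I, i)" "I \<subseteq> {..<8}" "i \<in> I" by auto
    then show "(case case b of (I, i) \<Rightarrow> (I - {i}, i) of (K, i) \<Rightarrow> (insert i K, i)) = b"
      and "(case b of (I, i) \<Rightarrow> (I - {i}, i)) \<in> Sigma ?P (\<lambda>K. {..<8} - K)" by auto
  qed
  also have "\<dots> = pairing \<alpha> (wedge v \<beta>)"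
    unfolding pairing_def
    by (simp add: sum.Sigma[symmetric] finite_subset_lessThan8 wedge_eq_sum sum_distrib_left)
  finally show ?thesis .
qed

lemma pairing_hodge:
  assumes "is_form k \<alpha>"
  shows "pairing (hodge \<alpha>) \<beta> = (-1) ^ k * pairing \<alpha> (hodge \<beta>)"
proof -
  let ?P = "Pow {..<8::nat}"
  have "pairing (hodge \<alpha>) \<beta> = (\<Sum>K\<in>?P. hsign K * \<alpha> K * \<beta> ({..<8} - K))"
    unfolding pairing_def
    by (rule sum.reindex_bij_witness[where i = "\<lambda>K. {..<8} - K" and j = "\<lambda>K. {..<8} - K"])
      (auto simp: hodge_eq_compl compl_compl_lessThan8)
  also have "\<dots> = (\<Sum>K\<in>?P. (-1) ^ k * (\<alpha> K * (hsign ({..<8} - K) * \<beta> ({..<8} - K))))"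
  proof (intro sum.cong refl)
    fix K assume K: "K \<in> ?P"
    show "hsign K * \<alpha> K * \<beta> ({..<8} - K) = (-1) ^ k * (\<alpha> K * (hsign ({..<8} - K) * \<beta> ({..<8} - K)))"
    proof (cases "\<alpha> K = 0")
      case False
      then have "card K = k" using assms by (simp add: is_form_def idx_sets_def)
      have "(hsign K :: 'a) = hsign K * (hsign ({..<8} - K) * hsign ({..<8} - K))"
        by (simp add: hsign_eq_shuffle_inversions)
      also have "\<dots> = (-1) ^ k * hsign ({..<8} - K)"
        using K \<open>card K = k\<close> unfolding mult.assoc[symmetric] by (subst hsign_mult_hsign_compl) auto
      finally have "hsign K = (-1) ^ k * (hsign ({..<8} - K) :: 'a)" .
      then show ?thesis by (simp add: mult_ac)
    qed simp
  qed
  also have "\<dots> = (-1) ^ k * pairing \<alpha> (hodge \<beta>)"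
    unfolding pairing_def by (simp add: sum_distrib_left hodge_eq_compl)
  finally show ?thesis .
qed

lemma pairing_wedge: "pairing (wedge v \<alpha>) \<beta> = pairing \<alpha> (interior v \<beta>)"
  by (metis pairing_commute pairing_interior)

lemma pairing_opD: "pairing (opD v w \<alpha>) \<beta> = - pairing \<alpha> (opD v w \<beta>)"
  by (simp add: opD_def pairing_wedge pairing_interior)

lemma pairing_opB:
  assumes "is_form 4 \<alpha>" and "is_form 4 \<beta>"
  shows "pairing (opB v w \<alpha>) \<beta> = - pairing \<alpha> (opB v w \<beta>)"
proof -
  have "pairing (opB v w \<alpha>) \<beta> = - pairing (opD v w \<alpha>) (hodge \<beta>)"
    using pairing_hodge[OF is_form_opD[OF assms(1)]] by (simp add: opB_eq_neg_hodge_opD[OF assms(1)])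
  also have "\<dots> = pairing \<alpha> (hodge (opD v w \<beta>))"
    by (simp add: pairing_opD opD_hodge_commute[OF assms(2)])
  also have "\<dots> = - pairing \<alpha> (opB v w \<beta>)"
    by (simp add: opB_eq_neg_hodge_opD[OF assms(2)] pairing_commute[of \<alpha>])
  finally show ?thesis .
qed

lemma inner4_eq_pairing:
  assumes "is_form 4 \<alpha>"
  shows "inner4 \<alpha> \<beta> = pairing \<alpha> \<beta>"
  unfolding inner4_def pairing_def
  using assms by (intro sum.mono_neutral_left) (auto simp: is_form_def idx_sets_def)

section \<open>Eigenvalues\<close>

lemma interior_of_real:
  "interior (\<lambda>i. of_real (v i)) (\<lambda>J. of_real (\<alpha> J)) = (\<lambda>J. of_real (interior v \<alpha> J) :: 'a::{real_algebra_1, comm_ring_1})"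
  by (simp add: fun_eq_iff interior_def)

lemma hodge_of_real:
  "hodge (\<lambda>J. of_real (\<alpha> J)) = (\<lambda>J. of_real (hodge \<alpha> J) :: 'a::{real_algebra_1, comm_ring_1})"
  by (simp add: fun_eq_iff hodge_def hsign_def)

lemma opB_of_real:
  "opB (\<lambda>i. of_real (v i)) (\<lambda>i. of_real (w i)) (\<lambda>J. of_real (\<alpha> J)) =
    (\<lambda>J. of_real (opB v w \<alpha> J) :: 'a::{real_algebra_1, comm_ring_1})"
  by (simp add: opB_def interior_of_real hodge_of_real)

lemma eigenvalue_cube_cases:
  fixes B :: "('b \<Rightarrow> complex) \<Rightarrow> ('b \<Rightarrow> complex)"
  assumes scale: "\<And>a \<beta>. B (\<lambda>J. a * \<beta> J) = (\<lambda>J. a * B \<beta> J)"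
    and cube: "B (B (B \<alpha>)) = (\<lambda>J. - (c ^ 2) * B \<alpha> J)"
    and nonzero: "\<alpha> \<noteq> (\<lambda>_. 0)" and eigen: "B \<alpha> = (\<lambda>J. \<mu> * \<alpha> J)"
  shows "\<mu> \<in> {0, \<i> * c, - \<i> * c}"
proof -
  obtain J where J: "\<alpha> J \<noteq> 0" using nonzero by auto
  have "(\<lambda>J. \<mu> * (\<mu> * (\<mu> * \<alpha> J))) = (\<lambda>J. - (c ^ 2) * (\<mu> * \<alpha> J))"
    using cube by (simp add: eigen scale)
  then have "(\<mu> * (\<mu> - \<i> * c) * (\<mu> + \<i> * c)) * \<alpha> J = 0"
    by (drule_tac fun_cong[of _ _ J]) (simp add: algebra_simps power2_eq_square)
  then show ?thesis using J by (auto simp: add_eq_0_iff2)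
qed

text \<open>Since \<open>z\<^sup>2 = -c\<^sup>2\<close>, the operator \<open>B - z\<close> kills \<open>B\<^sup>2 x + z B x\<close>; the imaginary part
  \<open>Im z \<cdot> (B x)\<^sub>J\<close> of its \<open>J\<close>-coefficient keeps it nonzero.\<close>
lemma imaginary_eigenvector:
  fixes B :: "('b \<Rightarrow> complex) \<Rightarrow> ('b \<Rightarrow> complex)" and c :: real
  assumes add: "\<And>\<beta> \<gamma>. B (\<lambda>J. \<beta> J + \<gamma> J) = (\<lambda>J. B \<beta> J + B \<gamma> J)"
    and scale: "\<And>a \<beta>. B (\<lambda>J. a * \<beta> J) = (\<lambda>J. a * B \<beta> J)"
    and cube: "B (B (B x)) = (\<lambda>J. - (of_real c ^ 2) * B x J)"
    and real: "B x J \<in> \<real>" "B (B x) J \<in> \<real>" and nonzero: "B x J \<noteq> 0"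
    and z: "z = \<i> * of_real c \<or> z = - \<i> * of_real c" and "c \<noteq> 0"
  shows "B (\<lambda>K. B (B x) K + z * B x K) = (\<lambda>K. z * (B (B x) K + z * B x K))"
    and "(\<lambda>K. B (B x) K + z * B x K) \<noteq> (\<lambda>_. 0)"
proof -
  have z2: "z * z = - (of_real c ^ 2)" using z by (auto simp: power2_eq_square mult.left_commute mult.assoc)
  show "B (\<lambda>K. B (B x) K + z * B x K) = (\<lambda>K. z * (B (B x) K + z * B x K))"
    by (simp add: add scale cube fun_eq_iff algebra_simps z2[symmetric])
  obtain a b where ab: "B (B x) J = of_real a" "B x J = of_real b"
    using real by (auto elim!: Reals_cases)
  have "Im (B (B x) J + z * B x J) = Im z * b" using ab by simp
  moreover have "Im z \<noteq> 0" "b \<noteq> 0" using z \<open>c \<noteq> 0\<close> nonzero ab by auto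
  ultimately show "(\<lambda>K. B (B x) K + z * B x K) \<noteq> (\<lambda>_. 0)" by (metis zero_complex.sel(2) mult_eq_0_iff)
qed

definition basis_form :: "nat set \<Rightarrow> nat set \<Rightarrow> 'a::zero_neq_one" where
  "basis_form S = (\<lambda>J. if J = S then 1 else 0)"

lemma is_form_basis_form: "S \<subseteq> {..<8} \<Longrightarrow> card S = k \<Longrightarrow> is_form k (basis_form S)"
  by (simp add: is_form_def basis_form_def idx_sets_def)

lemma basis_form_nonzero: "basis_form S \<noteq> (\<lambda>_. 0)"
  by (auto simp: basis_form_def fun_eq_iff)

lemma interior_basis_form_insert:
  assumes "K \<subseteq> {..<8}" "a \<notin> K" "a < 8"
  shows "interior u (basis_form (insert a K)) K = (-1) ^ pos K a * u a"
proof -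
  have "interior u (basis_form (insert a K)) K =
      (\<Sum>i\<in>{..<8} - K. if i = a then (-1) ^ pos K i * u i else 0)"
    unfolding interior_eq_sum[OF assms(1)]
  proof (intro sum.cong refl)
    fix i assume "i \<in> {..<8} - K"
    then have "insert i K = insert a K \<longleftrightarrow> i = a" using assms by blast
    then show "(-1) ^ pos K i * u i * basis_form (insert a K) (insert i K) =
        (if i = a then (-1) ^ pos K i * u i else 0)" by (simp add: basis_form_def)
  qed
  then show ?thesis using assms by (simp add: sum.delta')
qed

lemma interior_basis_form_nonzero:
  assumes "interior u (basis_form I) J \<noteq> 0"
  shows "\<exists>b. b \<notin> J \<and> I = insert b J"
proof -
  have J: "J \<subseteq> {..<8}" using assms by (auto simp: interior_def split: if_splits)
  with assms obtain i where "i \<in> {..<8} - J" "(-1) ^ pos J i * u i * basis_form I (insert i J) \<noteq> 0"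
    by (auto simp: interior_eq_sum elim: sum.not_neutral_contains_not_neutral)
  then show ?thesis by (auto simp: basis_form_def split: if_splits)
qed

lemma interior_interior_basis_form:
  assumes "i < j" "j < 8" "K \<subseteq> {..<8}" "i \<notin> K" "j \<notin> K"
  shows "interior v (interior w (basis_form (insert i (insert j K)))) K =
    (-1) ^ (pos K i + pos K j) * (v j * w i - v i * w j)"
proof -
  let ?I = "insert i (insert j K)"
  let ?f = "\<lambda>a. (-1) ^ pos K a * v a * interior w (basis_form ?I) (insert a K)"
  have "?f a = 0" if "a \<in> {..<8} - K - {i, j}" for a
  proof (rule ccontr)
    assume "?f a \<noteq> 0"
    then obtain b where "?I = insert b (insert a K)"
      using interior_basis_form_nonzero by (metis mult_zero_right)
    then show False using that by auto
  qed
  then have "interior v (interior w (basis_form ?I)) K = ?f i + ?f j"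
    using assms by (simp add: interior_eq_sum sum.mono_neutral_right[of "{..<8} - K" "{i, j}"])
  moreover have "interior w (basis_form ?I) (insert i K) = (-1) ^ (pos K j + 1) * w j"
    using assms interior_basis_form_insert[of "insert i K" j w]
    by (simp add: insert_commute pos_insert)
  moreover have "interior w (basis_form ?I) (insert j K) = (-1) ^ pos K i * w i"
    using assms interior_basis_form_insert[of "insert j K" i w] by (simp add: pos_insert)
  ultimately show ?thesis by (simp add: power_add algebra_simps)
qed

lemma wedge_insert_eval:
  assumes "insert j K \<subseteq> {..<8}" "j \<notin> K"
    and vanish: "\<And>L. \<beta> L \<noteq> 0 \<Longrightarrow> L = K \<or> j \<notin> L"
  shows "wedge u \<beta> (insert j K) = (-1) ^ pos K j * u j * \<beta> K"
proof -
  have "\<beta> (insert j K - {l}) = 0" if "l \<in> K" for l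
    using vanish[of "insert j K - {l}"] that assms(2) by auto
  moreover have "finite K" using assms(1) finite_subset_lessThan8 by blast
  ultimately show ?thesis using assms(1,2) by (simp add: wedge_eq_sum)
qed

lemma opD_basis_form:
  assumes "K \<subseteq> {..<8}" "i \<notin> K" "j \<notin> K" "i \<noteq> j" "i < 8" "j < 8"
  shows "opD v w (basis_form (insert i K)) (insert j K) = (-1) ^ (pos K j + pos K i) * (v i * w j - v j * w i)"
proof -
  have "wedge u (interior u' (basis_form (insert i K))) (insert j K) = (-1) ^ pos K j * u j * ((-1) ^ pos K i * u' i)"
    for u u' :: "nat \<Rightarrow> 'a"
  proof -
    have "L = K \<or> j \<notin> L" if "interior u' (basis_form (insert i K)) L \<noteq> 0" for L
      using interior_basis_form_nonzero[OF that] assms by (metis insertCI insertE)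
    then show ?thesis
      using assms by (simp add: wedge_insert_eval interior_basis_form_insert)
  qed
  then show ?thesis by (simp add: opD_def power_add algebra_simps)
qed

lemma interior_scale_vector:
  "(\<And>i. i < 8 \<Longrightarrow> v' i = c * v i) \<Longrightarrow> interior v' \<alpha> = (\<lambda>J. c * interior v \<alpha> J)"
  by (simp add: fun_eq_iff interior_def sum_distrib_left algebra_simps)

lemma wedge_scale_vector:
  assumes "\<And>i. i < 8 \<Longrightarrow> v' i = c * v i"
  shows "wedge v' \<alpha> = (\<lambda>J. c * wedge v \<alpha> J)"
proof -
  have "(\<Sum>i\<in>J. (-1) ^ pos J i * v' i * \<alpha> (J - {i})) = c * (\<Sum>i\<in>J. (-1) ^ pos J i * v i * \<alpha> (J - {i}))"
    if "J \<subseteq> {..<8}" for J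
    unfolding sum_distrib_left using that assms by (intro sum.cong refl) auto
  then show ?thesis by (simp add: fun_eq_iff wedge_def)
qed

lemma opD_parallel:
  fixes v w :: "nat \<Rightarrow> 'a::field"
  assumes "\<And>i j. i < 8 \<Longrightarrow> j < 8 \<Longrightarrow> v i * w j = v j * w i"
  shows "opD v w \<alpha> = (\<lambda>_. 0)"
proof (cases "\<forall>i<8. v i = 0")
  case True
  then have "interior v \<alpha> = (\<lambda>_. 0)" "wedge v \<beta> = (\<lambda>_. 0)" for \<beta>
    using interior_scale_vector[of v 0 v] wedge_scale_vector[of v 0 v] by auto
  then show ?thesis by (simp add: opD_def)
next
  case False
  then obtain k where k: "k < 8" "v k \<noteq> 0" by auto
  define t where "t = w k / v k"
  have wt: "w i = t * v i" if "i < 8" for i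
    using assms[OF k(1) that] k(2) by (simp add: t_def field_simps)
  have "interior w \<alpha> = (\<lambda>J. t * interior v \<alpha> J)" "wedge w \<beta> = (\<lambda>J. t * wedge v \<beta> J)" for \<beta>
    using interior_scale_vector[of w t v, OF wt] wedge_scale_vector[of w t v, OF wt] by auto
  then show ?thesis by (simp add: opD_def)
qed

lemma opD_interior_interior:
  fixes v w :: "nat \<Rightarrow> 'a::field_char_0"
  shows "opD v w (interior v (interior w \<beta>)) = (\<lambda>_. 0)"
proof -
  have "interior w (interior v (interior w \<beta>)) = (\<lambda>J. - interior v (interior w (interior w \<beta>)) J)"
    by (simp add: fun_eq_iff interior_anticomm[of w v])
  then show ?thesis by (simp add: opD_def interior_interior_self)
qed

lemma obtain_subset_avoiding_pair:
  fixes i j :: nat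
  assumes "i < 8" "j < 8" "i \<noteq> j" "n \<le> 6"
  obtains K where "K \<subseteq> {..<8}" "i \<notin> K" "j \<notin> K" "card K = n"
proof -
  have "card ({..<8::nat} - {i, j}) = 6" using assms by (simp add: card_Diff_subset)
  then obtain K where "K \<subseteq> {..<8} - {i, j}" "card K = n"
    using assms(4) by (metis obtain_subset_with_card_n)
  then show ?thesis using that by auto
qed

lemma opB_kernel_nontrivial:
  fixes v w :: "nat \<Rightarrow> 'a::field_char_0"
  shows "\<exists>\<alpha>. is_form 4 \<alpha> \<and> \<alpha> \<noteq> (\<lambda>_. 0) \<and> opB v w \<alpha> = (\<lambda>_. 0)"
proof (cases "\<forall>i<8. \<forall>j<8. v i * w j = v j * w i")
  case True
  let ?\<alpha> = "basis_form {0, 1, 2, 3} :: nat set \<Rightarrow> 'a"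
  have "is_form 4 ?\<alpha>" by (rule is_form_basis_form) auto
  moreover have "opB v w ?\<alpha> = (\<lambda>_. 0)"
    using calculation True by (simp add: opB_eq_neg_hodge_opD opD_parallel)
  ultimately show ?thesis using basis_form_nonzero by blast
next
  case False
  then obtain i j where ij: "i < j" "j < 8" "v i * w j \<noteq> v j * w i"
    by (metis linorder_neqE_nat)
  obtain K where K: "K \<subseteq> {..<8}" "i \<notin> K" "j \<notin> K" "card K = 4"
    by (rule obtain_subset_avoiding_pair[of i j 4]) (use ij in auto)
  define \<alpha> :: "nat set \<Rightarrow> 'a" where "\<alpha> = interior v (interior w (basis_form (insert i (insert j K))))"
  have "is_form 6 (basis_form (insert i (insert j K)) :: nat set \<Rightarrow> 'a)"
    using K ij finite_subset_lessThan8[OF K(1)] by (intro is_form_basis_form) auto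
  then have "is_form 4 \<alpha>" unfolding \<alpha>_def using is_form_interior[OF is_form_interior] by fastforce
  moreover have "\<alpha> K \<noteq> 0"
    using ij K by (simp add: \<alpha>_def interior_interior_basis_form)
  moreover have "opB v w \<alpha> = (\<lambda>_. 0)"
    using \<open>is_form 4 \<alpha>\<close> by (simp add: opB_eq_neg_hodge_opD \<alpha>_def opD_interior_interior)
  ultimately show ?thesis by auto
qed

lemma opB_nonzero:
  fixes v w :: "nat \<Rightarrow> 'a::field"
  assumes "i < 8" "j < 8" "v i * w j \<noteq> v j * w i"
  shows "\<exists>\<alpha> J. is_form 4 \<alpha> \<and> opB v w \<alpha> J \<noteq> 0"
proof -
  have "i \<noteq> j" using assms(3) by auto
  obtain K where K: "K \<subseteq> {..<8}" "i \<notin> K" "j \<notin> K" "card K = 3"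
    by (rule obtain_subset_avoiding_pair[of i j 3]) (use assms \<open>i \<noteq> j\<close> in auto)
  define \<alpha> :: "nat set \<Rightarrow> 'a" where "\<alpha> = basis_form (insert i K)"
  have \<alpha>: "is_form 4 \<alpha>"
    unfolding \<alpha>_def using K assms finite_subset_lessThan8[OF K(1)] by (intro is_form_basis_form) auto
  have "opB v w \<alpha> ({..<8} - insert j K) = - (hsign (insert j K) * opD v w \<alpha> (insert j K))"
    using K assms by (simp add: opB_eq_neg_hodge_opD[OF \<alpha>] hodge_eq_compl compl_compl_lessThan8)
  also have "\<dots> \<noteq> 0"
    using K assms \<open>i \<noteq> j\<close> by (simp add: \<alpha>_def opD_basis_form hsign_eq_shuffle_inversions)
  finally show ?thesis using \<alpha> by blast
qed

lemma lagrange_identity: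
  fixes v w :: "nat \<Rightarrow> 'a::comm_ring_1"
  shows "(\<Sum>i\<in>A. \<Sum>j\<in>A. (v i * w j - v j * w i)^2) =
    2 * ((\<Sum>i\<in>A. v i^2) * (\<Sum>i\<in>A. w i^2) - (\<Sum>i\<in>A. v i * w i)^2)"
proof -
  have "(\<Sum>i\<in>A. \<Sum>j\<in>A. (v i * w j - v j * w i)^2) =
     (\<Sum>i\<in>A. \<Sum>j\<in>A. v i^2 * w j^2 + w i^2 * v j^2 - 2 * ((v i * w i) * (v j * w j)))"
    by (intro sum.cong refl) (simp add: power2_eq_square algebra_simps)
  also have "\<dots> = (\<Sum>i\<in>A. \<Sum>j\<in>A. v i^2 * w j^2) + (\<Sum>i\<in>A. \<Sum>j\<in>A. w i^2 * v j^2)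
      - 2 * (\<Sum>i\<in>A. \<Sum>j\<in>A. (v i * w i) * (v j * w j))"
    by (simp add: sum.distrib sum_subtractf sum_distrib_left)
  also have "\<dots> = (\<Sum>i\<in>A. v i^2) * (\<Sum>i\<in>A. w i^2) + (\<Sum>i\<in>A. w i^2) * (\<Sum>i\<in>A. v i^2)
      - 2 * ((\<Sum>i\<in>A. v i * w i) * (\<Sum>i\<in>A. v i * w i))"
    by (simp only: sum_product)
  finally show ?thesis by (simp add: power2_eq_square algebra_simps)
qed

lemma wedge_norm_sq:
  "(wedge_norm v w)^2 = (\<Sum>i<8. v i^2) * (\<Sum>i<8. w i^2) - (\<Sum>i<8. v i * w i)^2"
proof -
  have "0 \<le> (\<Sum>i<8. \<Sum>j<8. (v i * w j - v j * w i)^2)" by (intro sum_nonneg) auto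
  then show ?thesis by (simp add: wedge_norm_def lagrange_identity)
qed

lemma wedge_norm_eq_0_iff:
  "wedge_norm v w = 0 \<longleftrightarrow> (\<forall>i<8. \<forall>j<8. v i * w j = v j * w i)"
proof -
  have "wedge_norm v w = 0 \<longleftrightarrow> (\<Sum>i<8. \<Sum>j<8. (v i * w j - v j * w i)^2) = 0"
    by (simp add: wedge_norm_def lagrange_identity)
  also have "\<dots> \<longleftrightarrow> (\<forall>i<8. \<forall>j<8. v i * w j = v j * w i)"
    by (simp add: sum_nonneg sum_nonneg_eq_0_iff Ball_def)
  finally show ?thesis .
qed

lemma inner4_opB:
  assumes "is_form 4 \<alpha>" and "is_form 4 \<beta>"
  shows "inner4 (opB v w \<alpha>) \<beta> = - inner4 \<alpha> (opB v w \<beta>)"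
proof -
  have "is_form 4 (opB v w \<alpha>)" using is_form_opB[OF assms(1)] by simp
  then show ?thesis using assms by (simp add: inner4_eq_pairing pairing_opB)
qed

definition form_eigenvalues :: "nat \<Rightarrow> ((nat set \<Rightarrow> complex) \<Rightarrow> (nat set \<Rightarrow> complex)) \<Rightarrow> complex set" where
  "form_eigenvalues k B = {\<mu>. \<exists>\<alpha>. is_form k \<alpha> \<and> \<alpha> \<noteq> (\<lambda>_. 0) \<and> B \<alpha> = (\<lambda>I. \<mu> * \<alpha> I)}"

lemma opB_add [simp]: "opB v w (\<lambda>J. \<alpha> J + \<beta> J) = (\<lambda>J. opB v w \<alpha> J + opB v w \<beta> J)"
  and opB_scale [simp]: "opB v w (\<lambda>J. c * \<alpha> J) = (\<lambda>J. c * opB v w \<alpha> J)"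
  by (simp_all add: opB_def fun_eq_iff algebra_simps)

abbreviation (input) complexify :: "('b \<Rightarrow> real) \<Rightarrow> 'b \<Rightarrow> complex" where
  "complexify f \<equiv> \<lambda>x. complex_of_real (f x)"

abbreviation (input) complex_opB ::
    "(nat \<Rightarrow> real) \<Rightarrow> (nat \<Rightarrow> real) \<Rightarrow> (nat set \<Rightarrow> complex) \<Rightarrow> (nat set \<Rightarrow> complex)" where
  "complex_opB v w \<equiv> opB (complexify v) (complexify w)"

lemma complex_opB_cube:
  assumes "is_form 4 \<alpha>"
  shows "complex_opB v w (complex_opB v w (complex_opB v w \<alpha>)) =
    (\<lambda>J. - (complex_of_real (wedge_norm v w) ^ 2) * complex_opB v w \<alpha> J)"
proof -
  have "complex_of_real (wedge_norm v w)^2 = (\<Sum>i<8. complex_of_real (v i) * complex_of_real (v i)) *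
      (\<Sum>i<8. complex_of_real (w i) * complex_of_real (w i)) - (\<Sum>i<8. complex_of_real (v i) * complex_of_real (w i))^2"
    unfolding of_real_power[symmetric] wedge_norm_sq by (simp add: power2_eq_square)
  then show ?thesis using opB_cube[OF assms] by simp
qed

lemma complex_opB_eigenvalues_subset:
  "form_eigenvalues 4 (complex_opB v w) \<subseteq>
    {0, \<i> * complex_of_real (wedge_norm v w), - \<i> * complex_of_real (wedge_norm v w)}"
proof
  fix \<mu> assume "\<mu> \<in> form_eigenvalues 4 (complex_opB v w)"
  then obtain \<alpha> where \<alpha>: "is_form 4 \<alpha>" "\<alpha> \<noteq> (\<lambda>_. 0)" "complex_opB v w \<alpha> = (\<lambda>J. \<mu> * \<alpha> J)"
    by (auto simp: form_eigenvalues_def)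
  show "\<mu> \<in> {0, \<i> * complex_of_real (wedge_norm v w), - \<i> * complex_of_real (wedge_norm v w)}"
    by (rule eigenvalue_cube_cases[OF opB_scale complex_opB_cube[OF \<alpha>(1)] \<alpha>(2,3)])
qed

lemma zero_in_complex_opB_eigenvalues: "0 \<in> form_eigenvalues 4 (complex_opB v w)"
proof -
  obtain \<alpha> where \<alpha>: "is_form 4 \<alpha>" "\<alpha> \<noteq> (\<lambda>_. 0)" "opB v w \<alpha> = (\<lambda>_. 0)"
    using opB_kernel_nontrivial by blast
  let ?\<alpha> = "complexify \<alpha>"
  have "is_form 4 ?\<alpha>" using \<alpha>(1) by (simp add: is_form_def)
  moreover have "?\<alpha> \<noteq> (\<lambda>_. 0)" using \<alpha>(2) by (auto simp: fun_eq_iff)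
  moreover have "complex_opB v w ?\<alpha> = (\<lambda>J. 0 * ?\<alpha> J)" using \<alpha>(3) by (simp add: opB_of_real)
  ultimately show ?thesis unfolding form_eigenvalues_def by blast
qed

lemma imaginary_in_complex_opB_eigenvalues:
  assumes "z = \<i> * complex_of_real (wedge_norm v w) \<or> z = - \<i> * complex_of_real (wedge_norm v w)"
    and "wedge_norm v w \<noteq> 0"
  shows "z \<in> form_eigenvalues 4 (complex_opB v w)"
proof -
  obtain i j where "i < 8" "j < 8" "v i * w j \<noteq> v j * w i"
    using assms(2) by (auto simp: wedge_norm_eq_0_iff)
  then obtain x J where x: "is_form 4 x" "opB v w x J \<noteq> 0"
    using opB_nonzero by blast
  let ?x = "complexify x"
  let ?y = "\<lambda>K. complex_opB v w (complex_opB v w ?x) K + z * complex_opB v w ?x K"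
  have "is_form 4 ?x" using x(1) by (simp add: is_form_def)
  have "complex_opB v w ?y = (\<lambda>K. z * ?y K)" and "?y \<noteq> (\<lambda>_. 0)"
    using imaginary_eigenvector[OF opB_add opB_scale complex_opB_cube[OF \<open>is_form 4 ?x\<close>] _ _ _ assms]
    using x(2) by (simp_all add: opB_of_real)
  moreover have "is_form 4 ?y"
    using is_form_opB[OF is_form_opB[OF \<open>is_form 4 ?x\<close>]] is_form_opB[OF \<open>is_form 4 ?x\<close>] by simp
  ultimately show ?thesis unfolding form_eigenvalues_def by blast
qed

lemma complex_opB_eigenvalues:
  "form_eigenvalues 4 (complex_opB v w) =
    {0, \<i> * complex_of_real (wedge_norm v w), - \<i> * complex_of_real (wedge_norm v w)}"
proof (rule antisym)
  show "{0, \<i> * complex_of_real (wedge_norm v w), - \<i> * complex_of_real (wedge_norm v w)} \<subseteq>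
      form_eigenvalues 4 (complex_opB v w)"
    using zero_in_complex_opB_eigenvalues[of v w] imaginary_in_complex_opB_eigenvalues[of _ v w]
    by (cases "wedge_norm v w = 0") auto
qed (rule complex_opB_eigenvalues_subset)

theorem mainTheorem17:
  fixes v w :: "nat \<Rightarrow> real"
  shows "(\<forall>\<alpha> \<beta>. is_form 4 \<alpha> \<longrightarrow> is_form 4 \<beta> \<longrightarrow>
            inner4 (opB v w \<alpha>) \<beta> = - inner4 \<alpha> (opB v w \<beta>))
       \<and> {mu::complex. \<exists>\<alpha>. is_form 4 \<alpha> \<and> \<alpha> \<noteq> (\<lambda>_. 0) \<and>
            opB (\<lambda>i. complex_of_real (v i)) (\<lambda>i. complex_of_real (w i)) \<alpha> = (\<lambda>I. mu * \<alpha> I)}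
         = {0, \<i> * complex_of_real (wedge_norm v w), - \<i> * complex_of_real (wedge_norm v w)}"
  using inner4_opB complex_opB_eigenvalues[of v w] by (simp add: form_eigenvalues_def)

end
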